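(* For every $n\in\mathbb{N}$, there exists a planar graph $G$ on $2n$ vertices, of pathwidth $3$ and maximum degree $5$, such that $\pi_\alpha(G)\ge \log_2(n+1)$.
   Context: A string $s=s_1,\ldots,s_{2k}$ (of even length) is an anagram if $s_1,\ldots,s_k$ is a permutation of $s_{k+1},\ldots,s_{2k}$. For a graph $G$, a colouring $\varphi:V(G)\to\{1,\ldots,c\}$ is anagram-free if for every path $v_1,v_2,\ldots,v_{2k}$ in $G$ with an even number $2k\ge 2$ of vertices (i.e., an odd number of edges), the string $\varphi(v_1),\ldots,\varphi(v_{2k})$ is not an anagram. The anagram-free chromatic number $\pi_\alpha(G)$ is the smallest $c$ such that $G$ has an anagram-free colouring with $c$ colours. *)

theory Defs
  imports "HOL-Analysis.Analysis" "HOL-Library.Multiset"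
begin

definition simple_graph :: "'a set \<Rightarrow> 'a set set \<Rightarrow> bool" where
  "simple_graph V E \<longleftrightarrow> finite V \<and> (\<forall>e\<in>E. e \<subseteq> V \<and> card e = 2)"

definition degree :: "'a set \<Rightarrow> 'a set set \<Rightarrow> 'a \<Rightarrow> nat" where
  "degree V E v = card {u\<in>V. {u, v} \<in> E}"

definition max_degree :: "'a set \<Rightarrow> 'a set set \<Rightarrow> nat" where
  "max_degree V E = Max (insert 0 (degree V E ` V))"

definition planar :: "'a set \<Rightarrow> 'a set set \<Rightarrow> bool" where
  "planar V E \<longleftrightarrow> (\<exists>(pos :: 'a \<Rightarrow> complex) (\<Gamma> :: 'a set \<Rightarrow> real \<Rightarrow> complex).
      inj_on pos V \<and>
      (\<forall>e\<in>E. arc (\<Gamma> e) \<and> {pathstart (\<Gamma> e), pathfinish (\<Gamma> e)} = pos ` e \<and>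
               path_image (\<Gamma> e) \<inter> pos ` V = pos ` e) \<and>
      (\<forall>e\<in>E. \<forall>e'\<in>E. e \<noteq> e' \<longrightarrow> path_image (\<Gamma> e) \<inter> path_image (\<Gamma> e') \<subseteq> pos ` (e \<inter> e')))"

definition path_decomposition :: "'a set \<Rightarrow> 'a set set \<Rightarrow> 'a set list \<Rightarrow> bool" where
  "path_decomposition V E bs \<longleftrightarrow> bs \<noteq> [] \<and>
     (\<forall>i<length bs. bs ! i \<subseteq> V) \<and>
     (\<forall>v\<in>V. \<exists>i<length bs. v \<in> bs ! i) \<and>
     (\<forall>e\<in>E. \<exists>i<length bs. e \<subseteq> bs ! i) \<and>
     (\<forall>v i j k. i \<le> j \<and> j \<le> k \<and> k < length bs \<and> v \<in> bs ! i \<and> v \<in> bs ! k \<longrightarrow> v \<in> bs ! j)"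

definition pd_width :: "'a set list \<Rightarrow> nat" where
  "pd_width bs = Max (card ` set bs) - 1"

definition pathwidth :: "'a set \<Rightarrow> 'a set set \<Rightarrow> nat" where
  "pathwidth V E = (LEAST w. \<exists>bs. path_decomposition V E bs \<and> pd_width bs = w)"

definition gpath :: "'a set \<Rightarrow> 'a set set \<Rightarrow> 'a list \<Rightarrow> bool" where
  "gpath V E xs \<longleftrightarrow> xs \<noteq> [] \<and> set xs \<subseteq> V \<and> distinct xs \<and>
     (\<forall>i. i + 1 < length xs \<longrightarrow> {xs ! i, xs ! (i + 1)} \<in> E)"

definition anagram :: "'b list \<Rightarrow> bool" where
  "anagram s \<longleftrightarrow> even (length s) \<and>
     mset (take (length s div 2) s) = mset (drop (length s div 2) s)"

definition anagram_free_colouring :: "'a set \<Rightarrow> 'a set set \<Rightarrow> nat \<Rightarrow> ('a \<Rightarrow> nat) \<Rightarrow> bool" where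
  "anagram_free_colouring V E c \<phi> \<longleftrightarrow> \<phi> ` V \<subseteq> {1..c} \<and>
     (\<forall>xs. gpath V E xs \<and> even (length xs) \<and> length xs \<ge> 2 \<longrightarrow> \<not> anagram (map \<phi> xs))"

definition anagram_chromatic_number :: "'a set \<Rightarrow> 'a set set \<Rightarrow> nat" where
  "anagram_chromatic_number V E = (LEAST c. \<exists>\<phi>. anagram_free_colouring V E c \<phi>)"

end

theory Submission
  imports Defs
begin

(* The graph is the strong product of the path on n vertices with K_2: n rungs {2t, 2t+1}, any
   two consecutive rungs spanning a K_4.  Bags of two consecutive rungs give pathwidth 3, and
   drawing rung t on the circle of radius t + 1 shows planarity.

   Suppose an anagram-free colouring uses c colours with 2^c < n + 1.  The sets of colours
   occurring an odd number of times on the first k rungs, k = 0, ..., n, cannot all be distinct,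
   so some block of consecutive rungs contains every colour an even number of times.  Reading
   each rung of the block as an edge between its two colours gives a multigraph with all
   degrees even; as for Eulerian graphs, it can be oriented so that every colour is as often a
   tail as a head.  The path going out along the tails of the block and back along the heads
   is then coloured by an anagram. *)

lemma pathwidth_le_pd_width:
  "path_decomposition V E bs \<Longrightarrow> pathwidth V E \<le> pd_width bs"
  unfolding pathwidth_def by (rule Least_le) blast

lemma pd_width_le:
  assumes "bs \<noteq> []" "\<And>b. b \<in> set bs \<Longrightarrow> card b \<le> k + 1"
  shows "pd_width bs \<le> k"
  using assms unfolding pd_width_def by (simp add: le_diff_conv)

lemma anagram_free_colouring_if_inj:
  assumes "inj_on \<phi> V" "\<phi> ` V \<subseteq> {1..c}"
  shows "anagram_free_colouring V E c \<phi>"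
  unfolding anagram_free_colouring_def
proof (intro conjI allI impI notI)
  show "\<phi> ` V \<subseteq> {1..c}" by fact
  fix xs assume xs: "gpath V E xs \<and> even (length xs) \<and> 2 \<le> length xs" and "anagram (map \<phi> xs)"
  define k where "k = length xs div 2"
  have "distinct (map \<phi> xs)"
    using xs assms(1) by (auto simp: gpath_def distinct_map intro: inj_on_subset)
  moreover have "mset (take k (map \<phi> xs)) = mset (drop k (map \<phi> xs))"
    using \<open>anagram (map \<phi> xs)\<close> by (simp add: anagram_def k_def)
  then have "set (take k (map \<phi> xs)) = set (drop k (map \<phi> xs))"
    by (metis set_mset_mset)
  ultimately have "take k (map \<phi> xs) = []"
    using set_take_disj_set_drop_if_distinct[of "map \<phi> xs" k k] by auto
  then have "k = 0" using xs by (simp add: gpath_def)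
  then show False using xs unfolding k_def by linarith
qed

lemma anagram_chromatic_number_attained:
  assumes "finite V"
  shows "\<exists>\<phi>. anagram_free_colouring V E (anagram_chromatic_number V E) \<phi>"
proof -
  obtain h where h: "bij_betw h V {0..<card V}"
    using ex_bij_betw_finite_nat[OF assms] by blast
  then have "anagram_free_colouring V E (card V) (Suc \<circ> h)"
    by (intro anagram_free_colouring_if_inj)
       (auto simp: bij_betw_def inj_on_def image_def Suc_le_eq)
  then have "\<exists>c \<phi>. anagram_free_colouring V E c \<phi>" by blast
  then show ?thesis
    unfolding anagram_chromatic_number_def by (rule LeastI_ex)
qed

lemma gpath_iff_successively:
  "gpath V E xs \<longleftrightarrow>
     xs \<noteq> [] \<and> set xs \<subseteq> V \<and> distinct xs \<and> successively (\<lambda>u v. {u, v} \<in> E) xs"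
  unfolding gpath_def successively_conv_nth by simp

section \<open>Drawings with disjoint edge interiors\<close>

locale injective_drawing =
  fixes V :: "'a set" and E :: "'a set set"
    and pos :: "'a \<Rightarrow> complex" and \<Gamma> :: "'a set \<Rightarrow> real \<Rightarrow> complex"
  assumes inj_pos: "inj_on pos V"
    and continuous_edge: "\<And>e. e \<in> E \<Longrightarrow> continuous_on {0..1} (\<Gamma> e)"
    and edge_ends: "\<And>e. e \<in> E \<Longrightarrow>
      \<exists>u v. u \<in> V \<and> v \<in> V \<and> u \<noteq> v \<and> e = {u, v} \<and> \<Gamma> e 0 = pos u \<and> \<Gamma> e 1 = pos v"
    and interior_avoids_vertices:
      "\<And>e s v. e \<in> E \<Longrightarrow> 0 < s \<Longrightarrow> s < 1 \<Longrightarrow> v \<in> V \<Longrightarrow> \<Gamma> e s \<noteq> pos v"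
    and interiors_disjoint: "\<And>e e' s s'. e \<in> E \<Longrightarrow> e' \<in> E \<Longrightarrow> 0 < s \<Longrightarrow> s < 1 \<Longrightarrow>
      0 < s' \<Longrightarrow> s' < 1 \<Longrightarrow> \<Gamma> e s = \<Gamma> e' s' \<Longrightarrow> e = e' \<and> s = s'"
begin

lemma edge_subset: "e \<in> E \<Longrightarrow> e \<subseteq> V"
  using edge_ends by blast

lemma edge_point_cases:
  assumes "e \<in> E" "s \<in> {0..1}"
  shows "(0 < s \<and> s < 1 \<and> \<Gamma> e s \<notin> pos ` V) \<or> (s \<in> {0, 1} \<and> \<Gamma> e s \<in> pos ` e)"
proof (cases "0 < s \<and> s < 1")
  case True
  then show ?thesis using interior_avoids_vertices[OF assms(1)] by blast
next
  case False
  then have "s = 0 \<or> s = 1" using assms(2) by auto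
  then show ?thesis using edge_ends[OF assms(1)] by auto
qed

lemma arc_edge:
  assumes "e \<in> E"
  shows "arc (\<Gamma> e)"
proof -
  obtain u v where uv: "u \<in> V" "v \<in> V" "u \<noteq> v" "e = {u, v}" "\<Gamma> e 0 = pos u" "\<Gamma> e 1 = pos v"
    using edge_ends[OF assms] by blast
  have "pos u \<noteq> pos v" using inj_pos uv by (auto dest: inj_onD)
  have "s = s'" if "s \<in> {0..1}" "s' \<in> {0..1}" "\<Gamma> e s = \<Gamma> e s'" for s s'
    using edge_point_cases[OF assms that(1)] edge_point_cases[OF assms that(2)]
      interiors_disjoint[OF assms assms, of s s'] that(3) \<open>pos u \<noteq> pos v\<close> uv
    by auto
  then show ?thesis
    using continuous_edge[OF assms] by (auto simp: arc_def path_def intro: inj_onI)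
qed

lemma path_image_edge_inter_vertices:
  assumes "e \<in> E"
  shows "path_image (\<Gamma> e) \<inter> pos ` V = pos ` e"
  unfolding path_image_def
proof
  show "\<Gamma> e ` {0..1} \<inter> pos ` V \<subseteq> pos ` e"
  proof
    fix z assume "z \<in> \<Gamma> e ` {0..1} \<inter> pos ` V"
    then obtain s where "s \<in> {0..1}" "z = \<Gamma> e s" "z \<in> pos ` V" by blast
    then show "z \<in> pos ` e" using edge_point_cases[OF assms, of s] by blast
  qed
  obtain u v where uv: "u \<in> V" "v \<in> V" "e = {u, v}" "\<Gamma> e 0 = pos u" "\<Gamma> e 1 = pos v"
    using edge_ends[OF assms] by blast
  have "pos u \<in> \<Gamma> e ` {0..1}" "pos v \<in> \<Gamma> e ` {0..1}"
    unfolding uv(4,5)[symmetric] by auto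
  then show "pos ` e \<subseteq> \<Gamma> e ` {0..1} \<inter> pos ` V"
    using uv(1-3) by blast
qed

lemma pathstart_pathfinish_edge:
  assumes "e \<in> E"
  shows "{pathstart (\<Gamma> e), pathfinish (\<Gamma> e)} = pos ` e"
  using edge_ends[OF assms] by (auto simp: pathstart_def pathfinish_def)

lemma edge_meets_other_edge_in_vertex:
  assumes "e \<in> E" "e' \<in> E" "e \<noteq> e'" "s \<in> {0..1}" "s' \<in> {0..1}" "\<Gamma> e s = \<Gamma> e' s'"
  shows "\<Gamma> e s \<in> pos ` e"
proof (rule ccontr)
  assume "\<Gamma> e s \<notin> pos ` e"
  then have interior: "0 < s" "s < 1" "\<Gamma> e s \<notin> pos ` V"
    using edge_point_cases[OF assms(1,4)] by blast+
  show False
  proof (cases "0 < s' \<and> s' < 1")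
    case True
    then show False using interiors_disjoint[OF assms(1,2) interior(1,2)] assms(3,6) by blast
  next
    case False
    then have "\<Gamma> e' s' \<in> pos ` e'"
      using edge_point_cases[OF assms(2,5)] by blast
    then have "\<Gamma> e' s' \<in> pos ` V"
      using edge_subset[OF assms(2)] by blast
    then show False using interior(3) assms(6) by simp
  qed
qed

lemma path_image_edges_inter:
  assumes "e \<in> E" "e' \<in> E" "e \<noteq> e'"
  shows "path_image (\<Gamma> e) \<inter> path_image (\<Gamma> e') \<subseteq> pos ` (e \<inter> e')"
proof
  fix z assume "z \<in> path_image (\<Gamma> e) \<inter> path_image (\<Gamma> e')"
  then obtain s s' where s: "s \<in> {0..1}" "s' \<in> {0..1}" "z = \<Gamma> e s" "z = \<Gamma> e' s'"
    unfolding path_image_def by blast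
  obtain a where a: "a \<in> e" "z = pos a"
    using edge_meets_other_edge_in_vertex[OF assms s(1,2)] s(3,4) by auto
  obtain a' where a': "a' \<in> e'" "z = pos a'"
    using edge_meets_other_edge_in_vertex[OF assms(2,1) not_sym[OF assms(3)] s(2,1)] s(3,4) by auto
  have "a = a'"
    using inj_onD[OF inj_pos] a a' edge_subset assms(1,2) by blast
  then show "z \<in> pos ` (e \<inter> e')" using a a' by blast
qed

theorem planar: "planar V E"
  unfolding planar_def
  using inj_pos arc_edge pathstart_pathfinish_edge path_image_edge_inter_vertices
    path_image_edges_inter
  by blast

end

section \<open>Even blocks and balanced orientations\<close>

lemma exists_even_block:
  fixes R :: "nat \<Rightarrow> 'c multiset"
  assumes "finite C" "\<And>t. t < n \<Longrightarrow> set_mset (R t) \<subseteq> C" "2 ^ card C < n + 1"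
  shows "\<exists>i j. i < j \<and> j \<le> n \<and> (\<forall>c. even (count (\<Sum>t\<in>{i..<j}. R t) c))"
proof -
  define odd_part where "odd_part k = {c \<in> C. odd (count (\<Sum>t\<in>{0..<k}. R t) c)}" for k
  have "card (odd_part ` {0..n}) \<le> card (Pow C)"
    using assms(1) by (intro card_mono) (auto simp: odd_part_def)
  then have "\<not> inj_on odd_part {0..n}"
    using assms(1,3) by (intro pigeonhole) (simp add: card_Pow)
  then obtain i j where ij: "i < j" "j \<le> n" "odd_part i = odd_part j"
    unfolding inj_on_def by (metis atLeastAtMost_iff linorder_neqE_nat)
  have split: "(\<Sum>t\<in>{0..<j}. R t) = (\<Sum>t\<in>{0..<i}. R t) + (\<Sum>t\<in>{i..<j}. R t)"
    using ij by (simp add: sum.atLeastLessThan_concat)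
  have "even (count (\<Sum>t\<in>{i..<j}. R t) c)" for c
  proof (cases "c \<in> C")
    case True
    then have "odd (count (\<Sum>t\<in>{0..<i}. R t) c) = odd (count (\<Sum>t\<in>{0..<j}. R t) c)"
      using ij(3) unfolding odd_part_def by blast
    then show ?thesis by (simp add: split) argo
  next
    case False
    then have "count (R t) c = 0" if "t \<in> {i..<j}" for t
      using assms(2)[of t] that ij by (auto simp: count_eq_zero_iff)
    then show ?thesis by (simp add: count_sum)
  qed
  then show ?thesis using ij by blast
qed

abbreviation reorients :: "'c \<times> 'c \<Rightarrow> 'c \<times> 'c \<Rightarrow> bool" where
  "reorients p q \<equiv> q = p \<or> q = prod.swap p"

lemma balanced_reorientation_subdivide:
  assumes "rel_mset reorients (add_mset (Y, Z) P) Q"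
    and "image_mset fst Q = image_mset snd Q"
    and "p = (X, Z) \<or> p = (Z, X)"
  shows "\<exists>Q'. rel_mset reorients (add_mset (X, Y) (add_mset p P)) Q' \<and>
    image_mset fst Q' = image_mset snd Q'"
proof -
  obtain q Q'' where q: "Q = add_mset q Q''" "reorients (Y, Z) q" "rel_mset reorients P Q''"
    using msed_rel_invL[OF assms(1)] by blast
  define Q' where "Q' = (if q = (Y, Z) then add_mset (Y, X) (add_mset (X, Z) Q'')
                         else add_mset (X, Y) (add_mset (Z, X) Q''))"
  have "rel_mset reorients (add_mset (X, Y) (add_mset p P)) Q'"
    using assms(3) q(3) by (auto simp: Q'_def intro!: rel_mset_Plus)
  moreover have "image_mset fst Q' = image_mset snd Q'"
    using assms(2) q(1,2) by (auto simp: Q'_def add_mset_commute)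
  ultimately show ?thesis by blast
qed

(* Read P as a multigraph whose vertices all have even degree: it can be oriented so that every
   vertex is as often a tail as a head. *)
lemma exists_balanced_reorientation:
  fixes P :: "('c \<times> 'c) multiset"
  assumes "\<And>c. even (count (image_mset fst P + image_mset snd P) c)"
  shows "\<exists>Q. rel_mset reorients P Q \<and> image_mset fst Q = image_mset snd Q"
  using assms
proof (induction "size P" arbitrary: P rule: less_induct)
  case less
  show ?case
  proof (cases "P = {#}")
    case True
    then show ?thesis by (intro exI[of _ "{#}"]) (simp add: rel_mset_Zero)
  next
    case False
    then obtain X Y P' where P: "P = add_mset (X, Y) P'"
      by (metis multiset_cases surj_pair)
    show ?thesis
    proof (cases "X = Y")
      case True
      have "image_mset fst P + image_mset snd P =
          {#X, X#} + (image_mset fst P' + image_mset snd P')"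
        by (simp add: P True)
      then have "even (count (image_mset fst P' + image_mset snd P') c)" for c
        using less.prems[of c] by (auto split: if_splits)
      then obtain Q' where "rel_mset reorients P' Q'" "image_mset fst Q' = image_mset snd Q'"
        using less.hyps[of P'] by (auto simp: P)
      then show ?thesis
        by (intro exI[of _ "add_mset (X, Y) Q'"]) (simp add: P True rel_mset_Plus)
    next
      case False
      \<comment> \<open>X lies in a second pair (X, Z); contract the path Y X Z to the pair (Y, Z).\<close>
      have "odd (count (image_mset fst P' + image_mset snd P') X)"
        using less.prems[of X] False by (simp add: P)
      then have "X \<in># image_mset fst P' + image_mset snd P'"
        by (metis count_eq_zero_iff even_zero)
      then obtain p where p: "p \<in># P'" "fst p = X \<or> snd p = X" by auto
      define Z where "Z = (if fst p = X then snd p else fst p)"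
      have p_cases: "p = (X, Z) \<or> p = (Z, X)" using p(2) by (cases p) (auto simp: Z_def)
      define P'' where "P'' = P' - {#p#}"
      have P': "P' = add_mset p P''" using p(1) by (simp add: P''_def)
      define P0 where "P0 = add_mset (Y, Z) P''"
      have "image_mset fst P + image_mset snd P =
          {#X, X#} + (image_mset fst P0 + image_mset snd P0)"
        using p_cases by (auto simp: P P' P0_def)
      then have "even (count (image_mset fst P0 + image_mset snd P0) c)" for c
        using less.prems[of c] by (auto split: if_splits)
      then obtain Q where "rel_mset reorients P0 Q" "image_mset fst Q = image_mset snd Q"
        using less.hyps[of P0] by (auto simp: P P' P0_def)
      then show ?thesis
        unfolding P P' P0_def using p_cases by (rule balanced_reorientation_subdivide)
    qed
  qed
qed

lemma rel_mset_image_mset_mset_set: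
  assumes "finite I" "rel_mset R (image_mset f (mset_set I)) Q"
  shows "\<exists>g. (\<forall>t\<in>I. R (f t) (g t)) \<and> Q = image_mset g (mset_set I)"
  using assms
proof (induction I arbitrary: Q rule: finite_induct)
  case empty
  then show ?case by simp
next
  case (insert a I)
  have "image_mset f (mset_set (insert a I)) = add_mset (f a) (image_mset f (mset_set I))"
    using insert.hyps by simp
  then have "rel_mset R (add_mset (f a) (image_mset f (mset_set I))) Q"
    using insert.prems by simp
  then obtain b Q' where
    Q: "Q = add_mset b Q'" "R (f a) b" "rel_mset R (image_mset f (mset_set I)) Q'"
    using msed_rel_invL[of R "f a"] by blast
  then obtain g where g: "\<forall>t\<in>I. R (f t) (g t)" "Q' = image_mset g (mset_set I)"
    using insert.IH by blast
  have "image_mset (g(a := b)) (mset_set I) = image_mset g (mset_set I)"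
    using insert.hyps by (intro image_mset_cong) (auto simp: fun_upd_other)
  then have "Q = image_mset (g(a := b)) (mset_set (insert a I))"
    using insert.hyps Q(1) g(2) by (simp del: fun_upd_apply add: fun_upd_same)
  moreover have "\<forall>t\<in>insert a I. R (f t) ((g(a := b)) t)"
    using insert.hyps Q(2) g(1) by auto
  ultimately show ?case by blast
qed

lemma exists_balanced_orientation:
  assumes "finite I" "\<And>c. even (count (image_mset x (mset_set I) + image_mset y (mset_set I)) c)"
  shows "\<exists>s. image_mset (\<lambda>t. if s t then x t else y t) (mset_set I) =
             image_mset (\<lambda>t. if s t then y t else x t) (mset_set I)"
proof -
  let ?P = "image_mset (\<lambda>t. (x t, y t)) (mset_set I)"
  have "\<exists>Q. rel_mset reorients ?P Q \<and> image_mset fst Q = image_mset snd Q"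
    by (rule exists_balanced_reorientation)
      (simp only: multiset.map_comp comp_def fst_conv snd_conv assms(2))
  then obtain Q where Q: "rel_mset reorients ?P Q"
      "image_mset fst Q = image_mset snd Q"
    by blast
  obtain g where g: "\<forall>t\<in>I. g t = (x t, y t) \<or> g t = (y t, x t)" "Q = image_mset g (mset_set I)"
    using rel_mset_image_mset_mset_set[OF assms(1) Q(1)] by auto
  define s where "s t \<longleftrightarrow> g t = (x t, y t)" for t
  have "(if s t then x t else y t) = fst (g t)" "(if s t then y t else x t) = snd (g t)"
    if "t \<in> I" for t
    using g(1) that by (auto simp: s_def)
  then have "image_mset (\<lambda>t. if s t then x t else y t) (mset_set I) = image_mset fst Q"
    "image_mset (\<lambda>t. if s t then y t else x t) (mset_set I) = image_mset snd Q"
    unfolding g(2) multiset.map_comp comp_def using assms(1)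
    by (auto intro!: image_mset_cong)
  then show ?thesis using Q(2) by metis
qed

lemma sum_doubleton_mset:
  "(\<Sum>t\<in>I. {#x t, y t#}) = image_mset x (mset_set I) + image_mset y (mset_set I)"
  by (induction I rule: infinite_finite_induct) auto

section \<open>The ladder\<close>

definition ladder_vertices :: "nat \<Rightarrow> nat set" where
  "ladder_vertices n = {..<2 * n}"

(* The strong product of the path on n vertices with K_2: vertex v lies on rung v div 2. *)
definition ladder_edges :: "nat \<Rightarrow> nat set set" where
  "ladder_edges n = {{u, v} | u v. u < v \<and> v < 2 * n \<and> v div 2 \<le> u div 2 + 1}"

lemma ladder_adjacent_iff:
  "{u, v} \<in> ladder_edges n \<longleftrightarrow>
     u \<noteq> v \<and> u < 2 * n \<and> v < 2 * n \<and> u div 2 \<le> v div 2 + 1 \<and> v div 2 \<le> u div 2 + 1"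
  (is "_ \<longleftrightarrow> ?adjacent")
proof
  assume "{u, v} \<in> ladder_edges n"
  then obtain a b where "{u, v} = {a, b}" "a < b" "b < 2 * n" "b div 2 \<le> a div 2 + 1"
    unfolding ladder_edges_def by blast
  then show ?adjacent
    by (auto simp: doubleton_eq_iff div_le_mono)
next
  assume ?adjacent
  then have "{u, v} = {min u v, max u v} \<and> min u v < max u v \<and> max u v < 2 * n \<and>
      max u v div 2 \<le> min u v div 2 + 1"
    by (auto simp: min_def max_def)
  then show "{u, v} \<in> ladder_edges n"
    unfolding ladder_edges_def by blast
qed

lemma ladder_edgeE:
  assumes "e \<in> ladder_edges n"
  obtains u v where "e = {u, v}" "u < v" "{u, v} \<in> ladder_edges n"
  using assms unfolding ladder_edges_def by blast

lemma simple_graph_ladder: "simple_graph (ladder_vertices n) (ladder_edges n)"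
  unfolding simple_graph_def ladder_vertices_def ladder_edges_def by auto

lemma card_ladder_vertices: "card (ladder_vertices n) = 2 * n"
  by (simp add: ladder_vertices_def)

lemma max_degree_ladder: "max_degree (ladder_vertices n) (ladder_edges n) \<le> 5"
proof -
  have "degree (ladder_vertices n) (ladder_edges n) v \<le> 5" for v
  proof -
    define A where "A = {2 * (v div 2) - 2..<2 * (v div 2) + 4}"
    have "{u \<in> ladder_vertices n. {u, v} \<in> ladder_edges n} \<subseteq> A - {v}"
      by (auto simp: A_def ladder_adjacent_iff)
    then have "degree (ladder_vertices n) (ladder_edges n) v \<le> card (A - {v})"
      unfolding degree_def by (intro card_mono) (auto simp: A_def)
    also have "\<dots> = card A - 1"
      by (rule card_Diff_singleton) (auto simp: A_def)
    also have "card A \<le> 6"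
      by (simp add: A_def)
    finally show ?thesis by simp
  qed
  then show ?thesis
    unfolding max_degree_def by (simp add: ladder_vertices_def)
qed

definition ladder_bags :: "nat \<Rightarrow> nat set list" where
  "ladder_bags n = map (\<lambda>t. {2 * t..<2 * t + 4} \<inter> ladder_vertices n) [0..<n]"

lemma path_decomposition_ladder:
  assumes "n \<ge> 1"
  shows "path_decomposition (ladder_vertices n) (ladder_edges n) (ladder_bags n)"
proof -
  have bag: "ladder_bags n ! t = {2 * t..<2 * t + 4} \<inter> {..<2 * n}" if "t < n" for t
    using that by (simp add: ladder_bags_def ladder_vertices_def)
  have covers_edges: "\<exists>t<n. e \<subseteq> ladder_bags n ! t" if "e \<in> ladder_edges n" for e
  proof -
    obtain u v where "e = {u, v}" "u < v" "{u, v} \<in> ladder_edges n"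
      using \<open>e \<in> ladder_edges n\<close> by (rule ladder_edgeE)
    then have "u div 2 < n" "e \<subseteq> ladder_bags n ! (u div 2)"
      by (auto simp: ladder_adjacent_iff bag)
    then show ?thesis by blast
  qed
  have covers_vertices: "\<exists>t<n. v \<in> ladder_bags n ! t" if "v \<in> ladder_vertices n" for v
    using that by (intro exI[of _ "v div 2"]) (auto simp: bag ladder_vertices_def)
  have contiguous: "v \<in> ladder_bags n ! j"
    if "i \<le> j" "j \<le> k" "k < n" "v \<in> ladder_bags n ! i" "v \<in> ladder_bags n ! k" for v i j k
    using that by (simp add: bag)
  have "\<forall>t<n. ladder_bags n ! t \<subseteq> ladder_vertices n"
    by (simp add: bag ladder_vertices_def)
  moreover have "ladder_bags n \<noteq> []" "length (ladder_bags n) = n"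
    using assms by (auto simp: ladder_bags_def)
  ultimately show ?thesis
    unfolding path_decomposition_def using covers_vertices covers_edges contiguous by auto
qed

lemma pathwidth_ladder:
  assumes "n \<ge> 1"
  shows "pathwidth (ladder_vertices n) (ladder_edges n) \<le> 3"
proof -
  have "pd_width (ladder_bags n) \<le> 3"
  proof (rule pd_width_le)
    show "ladder_bags n \<noteq> []" using assms by (simp add: ladder_bags_def)
    fix b assume "b \<in> set (ladder_bags n)"
    then obtain t where "b \<subseteq> {2 * t..<2 * t + 4}" by (auto simp: ladder_bags_def)
    then show "card b \<le> 3 + 1" using card_mono[of "{2 * t..<2 * t + 4}" b] by simp
  qed
  then show ?thesis
    using pathwidth_le_pd_width[OF path_decomposition_ladder[OF assms]] by simp
qed

lemma ladder_edge_cases: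
  assumes "e \<in> ladder_edges n"
  obtains (rung) t where "t < n" "e = {2 * t, 2 * t + 1}"
    | (outer0) t where "t + 1 < n" "e = {2 * t, 2 * t + 2}"
    | (diagonal) t where "t + 1 < n" "e = {2 * t, 2 * t + 3}"
    | (antidiagonal) t where "t + 1 < n" "e = {2 * t + 1, 2 * t + 2}"
    | (outer1) t where "t + 1 < n" "e = {2 * t + 1, 2 * t + 3}"
proof -
  obtain u v where uv: "e = {u, v}" "u < v" "{u, v} \<in> ladder_edges n"
    using assms by (rule ladder_edgeE)
  define t where "t = u div 2"
  have "v < 2 * n" "v div 2 \<le> t + 1"
    using uv(3) by (auto simp: ladder_adjacent_iff t_def)
  then consider "t < n" "u = 2 * t" "v = 2 * t + 1" | "t + 1 < n" "u = 2 * t" "v = 2 * t + 2"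
    | "t + 1 < n" "u = 2 * t" "v = 2 * t + 3" | "t + 1 < n" "u = 2 * t + 1" "v = 2 * t + 2"
    | "t + 1 < n" "u = 2 * t + 1" "v = 2 * t + 3"
    using uv(2) unfolding t_def by linarith
  then show ?thesis using that uv(1) by cases blast+
qed

definition rung_top :: "(nat \<Rightarrow> bool) \<Rightarrow> nat \<Rightarrow> nat" where
  "rung_top s t = (if s t then 2 * t else 2 * t + 1)"

definition rung_bottom :: "(nat \<Rightarrow> bool) \<Rightarrow> nat \<Rightarrow> nat" where
  "rung_bottom s t = (if s t then 2 * t + 1 else 2 * t)"

lemma rung_top_div_2 [simp]: "rung_top s t div 2 = t"
  and rung_bottom_div_2 [simp]: "rung_bottom s t div 2 = t"
  and rung_top_neq_bottom [simp]: "rung_top s t \<noteq> rung_bottom s t"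
  by (simp_all add: rung_top_def rung_bottom_def)

definition out_and_back :: "(nat \<Rightarrow> bool) \<Rightarrow> nat \<Rightarrow> nat \<Rightarrow> nat list" where
  "out_and_back s i j = map (rung_top s) [i..<j] @ rev (map (rung_bottom s) [i..<j])"

lemma gpath_out_and_back:
  assumes "i < j" "j \<le> n"
  shows "gpath (ladder_vertices n) (ladder_edges n) (out_and_back s i j)"
proof -
  have adj: "{u, v} \<in> ladder_edges n"
    if "u \<noteq> v" "u div 2 < n" "v div 2 < n" "u div 2 \<le> v div 2 + 1" "v div 2 \<le> u div 2 + 1"
    for u v
    using that by (simp add: ladder_adjacent_iff) linarith
  have step: "successively (\<lambda>a b. {f a, f b} \<in> ladder_edges n) [i..<j]"
    if "\<And>t. f t div 2 = t" for f :: "nat \<Rightarrow> nat"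
  proof -
    have "f t \<noteq> f (Suc t)" for t
      using that[of t] that[of "Suc t"] by auto
    then show ?thesis
      using assms that by (auto simp: successively_conv_nth intro!: adj)
  qed
  have "{rung_top s (j - 1), rung_bottom s (j - 1)} \<in> ladder_edges n"
    using assms by (intro adj) auto
  then have walk: "successively (\<lambda>u v. {u, v} \<in> ladder_edges n) (out_and_back s i j)"
    unfolding out_and_back_def successively_append_iff successively_rev successively_map
    using assms step[of "rung_top s"] step[of "rung_bottom s"]
    by (simp add: hd_rev last_map insert_commute)
  have "inj_on (rung_top s) A" "inj_on (rung_bottom s) A" for A
    by (metis inj_onI rung_top_div_2, metis inj_onI rung_bottom_div_2)
  moreover have "rung_top s a \<noteq> rung_bottom s b" for a b
    by (metis rung_top_div_2 rung_bottom_div_2 rung_top_neq_bottom)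
  ultimately have "distinct (out_and_back s i j)"
    by (auto simp: out_and_back_def distinct_map)
  moreover have "set (out_and_back s i j) \<subseteq> ladder_vertices n"
    using assms by (auto simp: out_and_back_def ladder_vertices_def rung_top_def rung_bottom_def)
  ultimately show ?thesis
    using walk assms by (simp add: gpath_iff_successively out_and_back_def)
qed

lemma length_out_and_back: "length (out_and_back s i j) = 2 * (j - i)"
  by (simp add: out_and_back_def)

lemma anagram_out_and_back:
  assumes "image_mset (\<phi> \<circ> rung_top s) (mset_set {i..<j}) =
    image_mset (\<phi> \<circ> rung_bottom s) (mset_set {i..<j})"
  shows "anagram (map \<phi> (out_and_back s i j))"
proof -
  have "take (j - i) (out_and_back s i j) = map (rung_top s) [i..<j]"
    "drop (j - i) (out_and_back s i j) = rev (map (rung_bottom s) [i..<j])"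
    by (simp_all add: out_and_back_def)
  then show ?thesis
    using assms by (simp add: anagram_def length_out_and_back take_map drop_map multiset.map_comp)
qed

lemma ladder_colours_lower_bound:
  assumes "anagram_free_colouring (ladder_vertices n) (ladder_edges n) c \<phi>"
  shows "n + 1 \<le> 2 ^ c"
proof (rule ccontr)
  assume "\<not> n + 1 \<le> 2 ^ c"
  moreover have "\<phi> v \<in> {1..c}" if "v < 2 * n" for v
    using assms that unfolding anagram_free_colouring_def ladder_vertices_def by auto
  then have "set_mset {#\<phi> (2 * t), \<phi> (2 * t + 1)#} \<subseteq> {1..c}" if "t < n" for t
    using that by simp
  ultimately obtain i j where ij: "i < j" "j \<le> n"
    and "\<forall>col. even (count (\<Sum>t\<in>{i..<j}. {#\<phi> (2 * t), \<phi> (2 * t + 1)#}) col)"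
    using exists_even_block[of "{1..c}" n "\<lambda>t. {#\<phi> (2 * t), \<phi> (2 * t + 1)#}"] by auto
  then obtain s where "image_mset (\<phi> \<circ> rung_top s) (mset_set {i..<j}) =
      image_mset (\<phi> \<circ> rung_bottom s) (mset_set {i..<j})"
    using exists_balanced_orientation[of "{i..<j}" "\<lambda>t. \<phi> (2 * t)" "\<lambda>t. \<phi> (2 * t + 1)"]
    by (auto simp: sum_doubleton_mset comp_def rung_top_def rung_bottom_def if_distrib)
  then have "anagram (map \<phi> (out_and_back s i j))"
    by (rule anagram_out_and_back)
  moreover have "gpath (ladder_vertices n) (ladder_edges n) (out_and_back s i j)"
    using ij by (rule gpath_out_and_back)
  ultimately show False
    using assms ij unfolding anagram_free_colouring_def by (auto simp: length_out_and_back)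
qed

section \<open>A planar drawing of the ladder\<close>

definition polar_chart :: "real \<times> real \<Rightarrow> complex" where
  "polar_chart p = complex_of_real (fst p + 1) * exp (\<i> * complex_of_real (2 * pi * snd p / 3))"

lemma inj_on_polar_chart: "inj_on polar_chart ({0..} \<times> {0..<3})"
proof (rule inj_onI)
  fix p q assume p: "p \<in> {0..} \<times> {0..<3}" and q: "q \<in> {0..} \<times> {0..<3}"
    and eq: "polar_chart p = polar_chart q"
  have "norm (polar_chart x) = fst x + 1" if "x \<in> {0..} \<times> {0..<3}" for x
    using that by (auto simp: polar_chart_def norm_mult)
  from this[OF p] this[OF q] have "fst p = fst q"
    using eq by simp
  have "Arg2pi (polar_chart x) = 2 * pi * snd x / 3" if "x \<in> {0..} \<times> {0..<3}" for x
    using that by (intro Arg2pi_unique[OF polar_chart_def[symmetric]]) auto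
  from this[OF p] this[OF q] have "snd p = snd q"
    using eq by simp
  with \<open>fst p = fst q\<close> show "p = q" by (simp add: prod_eq_iff)
qed

lemma polar_chart_wrap: "polar_chart (r, 3) = polar_chart (r, 0)"
  by (simp add: polar_chart_def exp_eq_1 mult.commute)

lemma continuous_on_polar_chart: "continuous_on S polar_chart"
  unfolding polar_chart_def by (intro continuous_intros) auto

(* Coordinates (r, \<theta>) stand for the point polar_chart (r, \<theta>) of modulus r + 1 and argument
   2 pi \<theta> / 3.  The edge {2t+1, 2t+2} is drawn the long way round, from argument 2 pi / 3 to
   2 pi, so that it avoids the rung t + 1 and the diagonal {2t, 2t+3}. *)
definition vertex_coord :: "nat \<Rightarrow> real \<times> real" where
  "vertex_coord v = (real (v div 2), of_bool (odd v))"

definition edge_start :: "nat set \<Rightarrow> real \<times> real" where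
  "edge_start e = vertex_coord (Min e)"

definition edge_end :: "nat set \<Rightarrow> real \<times> real" where
  "edge_end e =
    (if odd (Min e) \<and> Max e = Min e + 1 then (real (Max e div 2), 3) else vertex_coord (Max e))"

definition edge_coord :: "nat set \<Rightarrow> real \<Rightarrow> real \<times> real" where
  "edge_coord e s = (1 - s) *\<^sub>R edge_start e + s *\<^sub>R edge_end e"

definition edge_of_coord :: "real \<times> real \<Rightarrow> nat set" where
  "edge_of_coord p = (let t = nat \<lfloor>fst p\<rfloor> in
     if fst p = real t then {2 * t, 2 * t + 1}
     else if snd p = 0 then {2 * t, 2 * t + 2}
     else if snd p = 1 then {2 * t + 1, 2 * t + 3}
     else if snd p < 1 then {2 * t, 2 * t + 3}
     else {2 * t + 1, 2 * t + 2})"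

lemma vertex_coord_in_strip: "vertex_coord v \<in> {0..} \<times> {0..<3}"
  by (simp add: vertex_coord_def)

lemma inj_vertex_coord: "inj vertex_coord"
proof (rule injI)
  fix u v assume "vertex_coord u = vertex_coord v"
  then have "u div 2 = v div 2" "odd u \<longleftrightarrow> odd v"
    by (auto simp: vertex_coord_def)
  then show "u = v" by presburger
qed

lemma edge_coord_ladder:
  "edge_coord {2 * t, 2 * t + 1} s = (real t, s)"
  "edge_coord {2 * t, 2 * t + 2} s = (real t + s, 0)"
  "edge_coord {2 * t, 2 * t + 3} s = (real t + s, s)"
  "edge_coord {2 * t + 1, 2 * t + 2} s = (real t + s, 1 + 2 * s)"
  "edge_coord {2 * t + 1, 2 * t + 3} s = (real t + s, 1)"
  by (simp_all add: edge_coord_def edge_start_def edge_end_def vertex_coord_def algebra_simps)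

lemma edge_coord_endpoints:
  "edge_coord e 0 = vertex_coord (Min e)"
  "polar_chart (edge_coord e 1) = polar_chart (vertex_coord (Max e))"
  by (auto simp: edge_coord_def edge_start_def edge_end_def vertex_coord_def polar_chart_wrap
      elim: oddE)

lemma not_vertex_coord:
  assumes "0 < s" "s < 1"
  shows "(real t + s, \<theta>) \<notin> range vertex_coord" "(real t, s) \<notin> range vertex_coord"
proof -
  have "real t + s \<noteq> real m" for m
  proof
    assume "real t + s = real m"
    then have "t < m" "m < t + 1" using assms by linarith+
    then show False by simp
  qed
  then show "(real t + s, \<theta>) \<notin> range vertex_coord"
    by (auto simp: vertex_coord_def)
  show "(real t, s) \<notin> range vertex_coord"
    using assms by (auto simp: vertex_coord_def)
qed

lemma edge_of_coord_interior:
  assumes "0 < s" "s < 1"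
  shows "edge_of_coord (real t, s) = {2 * t, 2 * t + 1}"
    and "edge_of_coord (real t + s, \<theta>) =
      (if \<theta> = 0 then {2 * t, 2 * t + 2} else if \<theta> = 1 then {2 * t + 1, 2 * t + 3}
       else if \<theta> < 1 then {2 * t, 2 * t + 3} else {2 * t + 1, 2 * t + 2})"
  using assms by (simp_all add: edge_of_coord_def Let_def floor_eq_iff[of s 0, THEN iffD2])

lemma ladder_edge_interior:
  assumes "e \<in> ladder_edges n" "0 < s" "s < 1"
  shows "edge_coord e s \<in> {0..} \<times> {0..<3} \<and> edge_coord e s \<notin> range vertex_coord \<and>
    edge_of_coord (edge_coord e s) = e"
  using assms(1)
  by (cases rule: ladder_edge_cases; simp only: edge_coord_ladder;
      use assms(2,3) in \<open>simp add: not_vertex_coord edge_of_coord_interior\<close>)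

lemma inj_ladder_edge_coord:
  assumes "e \<in> ladder_edges n"
  shows "inj (edge_coord e)"
  using assms unfolding inj_def
  by (cases rule: ladder_edge_cases; simp only: edge_coord_ladder) auto

lemma planar_ladder: "planar (ladder_vertices n) (ladder_edges n)"
proof -
  have "injective_drawing (ladder_vertices n) (ladder_edges n)
    (polar_chart \<circ> vertex_coord) (\<lambda>e. polar_chart \<circ> edge_coord e)"
  proof unfold_locales
    show "inj_on (polar_chart \<circ> vertex_coord) (ladder_vertices n)"
      using inj_on_polar_chart vertex_coord_in_strip inj_vertex_coord
      by (intro comp_inj_on) (auto intro: inj_on_subset)
    have chart_eq: "p = q"
      if "polar_chart p = polar_chart q" "p \<in> {0..} \<times> {0..<3}" "q \<in> {0..} \<times> {0..<3}" for p q
      using inj_on_polar_chart that by (auto dest: inj_onD)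
    fix e assume e: "e \<in> ladder_edges n"
    show "continuous_on {0..1} (polar_chart \<circ> edge_coord e)"
      unfolding edge_coord_def
      by (intro continuous_on_compose continuous_on_polar_chart continuous_intros)
    obtain u v where uv: "e = {u, v}" "u < v" "{u, v} \<in> ladder_edges n"
      using e by (rule ladder_edgeE)
    then have "Min e = u" "Max e = v" by auto
    then show "\<exists>u v. u \<in> ladder_vertices n \<and> v \<in> ladder_vertices n \<and> u \<noteq> v \<and> e = {u, v} \<and>
        (polar_chart \<circ> edge_coord e) 0 = (polar_chart \<circ> vertex_coord) u \<and>
        (polar_chart \<circ> edge_coord e) 1 = (polar_chart \<circ> vertex_coord) v"
      using uv by (intro exI[of _ u] exI[of _ v])
        (auto simp: edge_coord_endpoints ladder_vertices_def ladder_adjacent_iff)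
    fix s :: real assume s: "0 < s" "s < 1"
    show "(polar_chart \<circ> edge_coord e) s \<noteq> (polar_chart \<circ> vertex_coord) w" for w
    proof
      assume "(polar_chart \<circ> edge_coord e) s = (polar_chart \<circ> vertex_coord) w"
      then have "edge_coord e s = vertex_coord w"
        using ladder_edge_interior[OF e s] vertex_coord_in_strip by (intro chart_eq) auto
      then show False using ladder_edge_interior[OF e s] by auto
    qed
    fix e' and s' :: real assume e': "e' \<in> ladder_edges n" and s': "0 < s'" "s' < 1"
      and eq: "(polar_chart \<circ> edge_coord e) s = (polar_chart \<circ> edge_coord e') s'"
    then have "edge_coord e s = edge_coord e' s'"
      using ladder_edge_interior[OF e s] ladder_edge_interior[OF e' s'] by (intro chart_eq) auto
    then show "e = e' \<and> s = s'"
      using ladder_edge_interior[OF e s] ladder_edge_interior[OF e' s'] inj_ladder_edge_coord[OF e]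
      by (metis injD)
  qed
  then show ?thesis by (rule injective_drawing.planar)
qed

theorem theorem1:
  fixes n :: nat
  assumes "n \<ge> 1"
  shows "\<exists>(V :: nat set) (E :: nat set set).
           simple_graph V E \<and> card V = 2 * n \<and> planar V E \<and>
           pathwidth V E \<le> 3 \<and> max_degree V E \<le> 5 \<and>
           real (anagram_chromatic_number V E) \<ge> log 2 (real n + 1)"
proof -
  define c where "c = anagram_chromatic_number (ladder_vertices n) (ladder_edges n)"
  obtain \<phi> where "anagram_free_colouring (ladder_vertices n) (ladder_edges n) c \<phi>"
    using anagram_chromatic_number_attained[of "ladder_vertices n"]
    unfolding c_def ladder_vertices_def by blast
  then have "n + 1 \<le> 2 ^ c"
    by (rule ladder_colours_lower_bound)
  then have "real (n + 1) \<le> real (2 ^ c)"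
    by (simp only: of_nat_le_iff)
  then have "real n + 1 \<le> 2 ^ c"
    by simp
  then have "log 2 (real n + 1) \<le> log 2 (2 ^ c)"
    by (intro log_mono) auto
  then have "log 2 (real n + 1) \<le> real c"
    by simp
  then show ?thesis
    using simple_graph_ladder card_ladder_vertices planar_ladder pathwidth_ladder[OF assms]
      max_degree_ladder unfolding c_def by blast
qed

end
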